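(* Let $n\ge 2$, $h=1/n$, $\Omega=(0,1)^2$, $f$ continuous on $[0,1]^2$, $g\in H^{1/2}(\partial\Omega)$. (i) For every $\kappa>0$, the seven-point finite difference scheme described in the context has exactly one solution $\{u_{k,\ell}\}$. (ii) The five-point scheme described in the context has exactly one solution. (iii) If in addition $f\le 0$ in $\Omega$, then for every $0<\kappa\le 4$ the solution of the seven-point scheme (and in particular the solution of the five-point scheme) satisfies $\max_{(x_k,y_\ell)\in\Omega_h}u_{k,\ell}\le\max_{(x_k,y_\ell)\in\partial\Omega_h}Q_bg(x_k,y_\ell)$, where $\Omega_h$ is the set of all grid points and $\partial\Omega_h$ the set of boundary grid points.
   Context: Grid: $x_k=(k-\frac12)h$, $y_\ell=(\ell-\frac12)h$ for $k,\ell\in\{\frac12,1,\frac32,\dots,n+\frac12\}$. Grid points are $(x_k,y_\ell)$ with one index an integer in $\{1,\dots,n\}$ and the other a half-integer in $\{\frac12,\dots,n+\frac12\}$ (midpoints of the edges of the uniform square partition); a grid point is a boundary grid point if its half-integer index is $\frac12$ or $n+\frac12$. $Q_bg$ at a boundary grid point is the average of $g$ over the boundary edge of length $h$ centered at that point. Seven-point scheme (parameter $\kappa>0$): unknowns $u_{k,\ell}$ at all grid points with $u_{k,\ell}=Q_bg(x_k,y_\ell)$ at boundary grid points, and $c_1u_{i+\frac32,j}+c_2u_{i+\frac12,j}+c_3u_{i-\frac12,j}+c_4(u_{i+1,j-\frac12}+u_{i+1,j+\frac12}+u_{i,j-\frac12}+u_{i,j+\frac12})=\frac{h^2}{2}f(x_{i+\frac12},y_j)$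 for $i\in\{1,\dots,n-1\}$, $j\in\{1,\dots,n\}$, $c_1u_{i,j+\frac32}+c_2u_{i,j+\frac12}+c_3u_{i,j-\frac12}+c_4(u_{i-\frac12,j+1}+u_{i+\frac12,j+1}+u_{i-\frac12,j}+u_{i+\frac12,j})=\frac{h^2}{2}f(x_i,y_{j+\frac12})$ for $i\in\{1,\dots,n\}$, $j\in\{1,\dots,n-1\}$, with $c_1=c_3=\frac{\kappa}{4}-1$, $c_2=\frac{\kappa}{2}+2$, $c_4=-\frac{\kappa}{4}$. Five-point scheme: the case $\kappa=4$, i.e. the same boundary condition and $\frac{4u_{i+\frac12,j}-u_{i+1,j-\frac12}-u_{i+1,j+\frac12}-u_{i,j-\frac12}-u_{i,j+\frac12}}{h^2}=\frac12f(x_{i+\frac12},y_j)$, $\frac{4u_{i,j+\frac12}-u_{i-\frac12,j+1}-u_{i+\frac12,j+1}-u_{i-\frac12,j}-u_{i+\frac12,j}}{h^2}=\frac12f(x_i,y_{j+\frac12})$ for the same index ranges. *)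

theory Defs
  imports "HOL-Analysis.Analysis"
begin

text \<open>Index convention: a grid index k in {1/2, 1, 3/2, ..., n+1/2} is represented by the
  natural number K = 2k in {1, ..., 2n+1}.  So x_k = (k - 1/2) h = (K - 1) h / 2.
  A grid point has one integer index (K even) and one half-integer index (K odd).\<close>

definition grid :: "nat \<Rightarrow> (nat \<times> nat) set" where
  "grid n = {(K, L). 1 \<le> K \<and> K \<le> 2*n+1 \<and> 1 \<le> L \<and> L \<le> 2*n+1 \<and> odd (K + L)}"

definition bdry_grid :: "nat \<Rightarrow> (nat \<times> nat) set" where
  "bdry_grid n = {(K, L) \<in> grid n.
      (odd K \<and> (K = 1 \<or> K = 2*n+1)) \<or> (odd L \<and> (L = 1 \<or> L = 2*n+1))}"

definition coord :: "nat \<Rightarrow> nat \<Rightarrow> real" where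
  "coord n K = (real K - 1) / (2 * real n)"

definition Qb :: "nat \<Rightarrow> (real \<times> real \<Rightarrow> real) \<Rightarrow> nat \<times> nat \<Rightarrow> real" where
  "Qb n g p = (case p of (K, L) \<Rightarrow>
     if odd K then
       real n * integral {coord n L - 1 / (2 * real n) .. coord n L + 1 / (2 * real n)}
                   (\<lambda>t. g (coord n K, t))
     else
       real n * integral {coord n K - 1 / (2 * real n) .. coord n K + 1 / (2 * real n)}
                   (\<lambda>t. g (t, coord n L)))"

definition seven_point :: "nat \<Rightarrow> real \<Rightarrow> (real \<times> real \<Rightarrow> real) \<Rightarrow> (real \<times> real \<Rightarrow> real)
    \<Rightarrow> (nat \<times> nat \<Rightarrow> real) \<Rightarrow> bool" where
  "seven_point n \<kappa> f g u \<longleftrightarrow>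
    (let h = 1 / real n; c1 = \<kappa>/4 - 1; c2 = \<kappa>/2 + 2; c3 = \<kappa>/4 - 1; c4 = - \<kappa>/4 in
     (\<forall>p \<in> bdry_grid n. u p = Qb n g p) \<and>
     (\<forall>i \<in> {1..n-1}. \<forall>j \<in> {1..n}.
        c1 * u (2*i+3, 2*j) + c2 * u (2*i+1, 2*j) + c3 * u (2*i-1, 2*j)
        + c4 * (u (2*i+2, 2*j-1) + u (2*i+2, 2*j+1) + u (2*i, 2*j-1) + u (2*i, 2*j+1))
        = h^2 / 2 * f (coord n (2*i+1), coord n (2*j))) \<and>
     (\<forall>i \<in> {1..n}. \<forall>j \<in> {1..n-1}.
        c1 * u (2*i, 2*j+3) + c2 * u (2*i, 2*j+1) + c3 * u (2*i, 2*j-1)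
        + c4 * (u (2*i-1, 2*j+2) + u (2*i+1, 2*j+2) + u (2*i-1, 2*j) + u (2*i+1, 2*j))
        = h^2 / 2 * f (coord n (2*i), coord n (2*j+1))))"

definition five_point :: "nat \<Rightarrow> (real \<times> real \<Rightarrow> real) \<Rightarrow> (real \<times> real \<Rightarrow> real)
    \<Rightarrow> (nat \<times> nat \<Rightarrow> real) \<Rightarrow> bool" where
  "five_point n f g u \<longleftrightarrow>
    (let h = 1 / real n in
     (\<forall>p \<in> bdry_grid n. u p = Qb n g p) \<and>
     (\<forall>i \<in> {1..n-1}. \<forall>j \<in> {1..n}.
        (4 * u (2*i+1, 2*j) - u (2*i+2, 2*j-1) - u (2*i+2, 2*j+1) - u (2*i, 2*j-1) - u (2*i, 2*j+1))
          / h^2 = 1/2 * f (coord n (2*i+1), coord n (2*j))) \<and>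
     (\<forall>i \<in> {1..n}. \<forall>j \<in> {1..n-1}.
        (4 * u (2*i, 2*j+1) - u (2*i-1, 2*j+2) - u (2*i+1, 2*j+2) - u (2*i-1, 2*j) - u (2*i+1, 2*j))
          / h^2 = 1/2 * f (coord n (2*i), coord n (2*j+1))))"

end

theory Submission
  imports Defs "Jordan_Normal_Form.Determinant"
begin

text \<open>
  Both schemes are square linear systems on the grid points: Dirichlet rows u p = Q_b g p at
  boundary points and seven-point rows at the other points, the five-point scheme being the case
  \<kappa> = 4. It therefore suffices to show that the homogeneous system has only the trivial solution.
  Write v and h for the values at midpoints of vertical and horizontal edges and, for each cell,
  D for the sum of its two vertical-edge values minus the sum of its two horizontal-edge values.
  Multiplying the homogeneous seven-point equations by v resp. h and summing by parts gives
  \<kappa>/4 \<Sum> D^2 + \<Sum> (\<Delta>v)^2 + \<Sum> (\<Delta>h)^2 = 0, where \<Delta> is the difference along rows resp.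
  columns; so v and h are constant along lines and vanish by the boundary conditions.

  For 0 < \<kappa> \<le> 4 the seven-point operator at p is a nonnegative combination
  (1 - \<kappa>/4) (axial differences) + \<kappa>/4 (diagonal differences) of differences u p - u q.
  If f \<le> 0 it is nonpositive at interior points, so at an interior maximiser the diagonal
  neighbour (K+1, L+1) is a maximiser too. Hence a maximiser with largest K + L lies on the
  boundary.
\<close>

section \<open>Square linear systems over a finite index set\<close>

lemma finite_linear_system_solvable:
  fixes a :: "'a \<Rightarrow> 'a \<Rightarrow> real" and b :: "'a \<Rightarrow> real"
  assumes I: "finite I"
    and homogeneous_trivial: "\<And>w. \<forall>p\<in>I. (\<Sum>q\<in>I. a p q * w q) = 0 \<Longrightarrow> \<forall>q\<in>I. w q = 0"
  shows "\<exists>u. \<forall>p\<in>I. (\<Sum>q\<in>I. a p q * u q) = b p"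
proof -
  define N where "N = card I"
  obtain e where e: "bij_betw e {..<N} I"
    using ex_bij_betw_nat_finite[OF I] unfolding N_def atLeast0LessThan by blast
  then have e_onto: "\<exists>r<N. p = e r" if "p \<in> I" for p
    using that by (auto simp: bij_betw_def)
  define A :: "real mat" where "A = mat N N (\<lambda>(r, c). a (e r) (e c))"
  define fun_of :: "real vec \<Rightarrow> 'a \<Rightarrow> real" where "fun_of x q = x $ inv_into {..<N} e q" for x q
  have A: "A \<in> carrier_mat N N"
    unfolding A_def by simp
  have fun_of_e: "fun_of x (e c) = x $ c" if "c < N" for x c
    using that e unfolding fun_of_def by (simp add: bij_betw_def bij_betw_inv_into_left)
  have mult_A: "(A *\<^sub>v x) $ r = (\<Sum>q\<in>I. a (e r) q * fun_of x q)"
    if "x \<in> carrier_vec N" "r < N" for x r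
  proof -
    have "(A *\<^sub>v x) $ r = (\<Sum>c<N. a (e r) (e c) * fun_of x (e c))"
      using that by (simp add: A_def scalar_prod_def atLeast0LessThan fun_of_e)
    also have "\<dots> = (\<Sum>q\<in>I. a (e r) q * fun_of x q)"
      using sum.reindex_bij_betw[OF e, of "\<lambda>q. a (e r) q * fun_of x q"] by simp
    finally show ?thesis .
  qed
  have "det A \<noteq> 0"
  proof
    assume "det A = 0"
    then obtain v where v: "v \<in> carrier_vec N" "v \<noteq> 0\<^sub>v N" "A *\<^sub>v v = 0\<^sub>v N"
      using det_0_iff_vec_prod_zero_field[OF A] by blast
    have "\<forall>p\<in>I. (\<Sum>q\<in>I. a p q * fun_of v q) = 0"
      using e_onto mult_A[OF v(1)] v(3) by (metis index_zero_vec(1))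
    then have "\<forall>q\<in>I. fun_of v q = 0"
      by (rule homogeneous_trivial)
    then have "v = 0\<^sub>v N"
      using v(1) e fun_of_e by (intro eq_vecI) (auto simp: bij_betw_def)
    with v(2) show False ..
  qed
  then have "A \<in> Units (ring_mat TYPE(real) N ())"
    by (rule det_non_zero_imp_unit[OF A])
  then obtain B where B: "B \<in> carrier_mat N N" "A * B = 1\<^sub>m N"
    unfolding Units_def ring_mat_def by auto
  define x where "x = B *\<^sub>v vec N (\<lambda>r. b (e r))"
  have x: "x \<in> carrier_vec N"
    unfolding x_def using B by simp
  have "A *\<^sub>v x = vec N (\<lambda>r. b (e r))"
    unfolding x_def using A B by (simp flip: assoc_mult_mat_vec)
  then have "\<forall>p\<in>I. (\<Sum>q\<in>I. a p q * fun_of x q) = b p"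
    using e_onto mult_A[OF x] by (metis index_vec)
  then show ?thesis
    by blast
qed

lemma finite_linear_system_unique_solution:
  fixes a :: "'a \<Rightarrow> 'a \<Rightarrow> real" and b :: "'a \<Rightarrow> real"
  assumes "finite I"
    and homogeneous_trivial: "\<And>w. \<forall>p\<in>I. (\<Sum>q\<in>I. a p q * w q) = 0 \<Longrightarrow> \<forall>q\<in>I. w q = 0"
  shows "\<exists>!u. u \<in> extensional I \<and> (\<forall>p\<in>I. (\<Sum>q\<in>I. a p q * u q) = b p)"
proof -
  obtain u where u: "\<forall>p\<in>I. (\<Sum>q\<in>I. a p q * u q) = b p"
    using finite_linear_system_solvable[OF assms] by blast
  have unique: "u1 = u2"
    if "u1 \<in> extensional I" "\<forall>p\<in>I. (\<Sum>q\<in>I. a p q * u1 q) = b p"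
      and "u2 \<in> extensional I" "\<forall>p\<in>I. (\<Sum>q\<in>I. a p q * u2 q) = b p" for u1 u2
  proof -
    have "\<forall>p\<in>I. (\<Sum>q\<in>I. a p q * (u1 q - u2 q)) = 0"
      using that by (simp add: right_diff_distrib sum_subtractf)
    then have "\<forall>q\<in>I. u1 q - u2 q = 0"
      by (rule homogeneous_trivial)
    then show ?thesis
      using that(1,3) by (intro extensionalityI) auto
  qed
  show ?thesis
    using u unique by (intro ex1I[of _ "restrict u I"]) auto
qed

section \<open>Discrete energy identity\<close>

lemma sum_adjacent_by_parts:
  fixes a b :: "nat \<Rightarrow> real"
  assumes "a 0 = 0" "a m = 0"
  shows "(\<Sum>i=1..m-1. a i * (b i + b (i+1))) = (\<Sum>i=1..m. (a (i-1) + a i) * b i)"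
proof (cases m)
  case (Suc k)
  have by_parts: "(\<Sum>i=1..Suc k. (a (i-1) + a i) * b i)
      = (\<Sum>i=1..k. a i * (b i + b (i+1))) + a 0 * b 1 + a (Suc k) * b (Suc k)" for k
    by (induction k) (simp_all add: algebra_simps)
  show ?thesis
    using by_parts[of k] assms unfolding Suc by simp
qed simp

lemma sum_second_difference:
  fixes a :: "nat \<Rightarrow> real"
  assumes "a 0 = 0" "a m = 0"
  shows "(\<Sum>i=1..m-1. a i * (2 * a i - a (i-1) - a (i+1))) = (\<Sum>i<m. (a (i+1) - a i)^2)"
proof (cases m)
  case (Suc k)
  have by_parts: "(\<Sum>i=1..k. a i * (2 * a i - a (i-1) - a (i+1)))
      = (\<Sum>i\<le>k. (a (i+1) - a i)^2) + a 0 * (a 1 - a 0) - a (k+1) * (a (k+1) - a k)" for k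
    by (induction k) (simp_all add: algebra_simps power2_eq_square)
  show ?thesis
    using by_parts[of k] assms unfolding Suc by (simp add: lessThan_Suc_atMost)
qed simp

lemma sum_energy_identity:
  fixes a b :: "nat \<Rightarrow> real"
  assumes "a 0 = 0" "a m = 0"
  shows "(\<Sum>i=1..m-1. a i * (c * (b i + b (i+1)) + (2 * a i - a (i-1) - a (i+1))))
       = c * (\<Sum>i=1..m. (a (i-1) + a i) * b i) + (\<Sum>i<m. (a (i+1) - a i)^2)"
proof -
  have "(\<Sum>i=1..m-1. a i * (c * (b i + b (i+1)) + (2 * a i - a (i-1) - a (i+1))))
      = (\<Sum>i=1..m-1. c * (a i * (b i + b (i+1))) + a i * (2 * a i - a (i-1) - a (i+1)))"
    by (intro sum.cong) (simp_all add: algebra_simps)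
  also have "\<dots> = c * (\<Sum>i=1..m-1. a i * (b i + b (i+1))) + (\<Sum>i=1..m-1. a i * (2 * a i - a (i-1) - a (i+1)))"
    by (simp add: sum.distrib sum_distrib_left)
  finally show ?thesis
    using sum_adjacent_by_parts[OF assms] sum_second_difference[OF assms] by simp
qed

lemma zero_if_sum_square_differences_zero:
  fixes a :: "nat \<Rightarrow> real"
  assumes "a 0 = 0" "(\<Sum>i<m. (a (i+1) - a i)^2) = 0" "i \<le> m"
  shows "a i = 0"
proof -
  have "\<forall>i<m. a (i+1) = a i"
    using assms(2) by (simp add: sum_nonneg_eq_0_iff)
  then show ?thesis
    using assms(1,3) by (induction i) auto
qed

lemma staggered_energy_identity:
  fixes v h :: "nat \<Rightarrow> nat \<Rightarrow> real"
  assumes v_bdry: "\<And>j. j \<in> {1..n} \<Longrightarrow> v 0 j = 0 \<and> v n j = 0"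
    and h_bdry: "\<And>i. i \<in> {1..n} \<Longrightarrow> h i 0 = 0 \<and> h i n = 0"
    and v_eq: "\<And>i j. i \<in> {1..n-1} \<Longrightarrow> j \<in> {1..n} \<Longrightarrow>
      (\<kappa>/2 + 2) * v i j + (\<kappa>/4 - 1) * (v (i-1) j + v (i+1) j)
        - \<kappa>/4 * (h i (j-1) + h i j + h (i+1) (j-1) + h (i+1) j) = 0"
    and h_eq: "\<And>i j. i \<in> {1..n} \<Longrightarrow> j \<in> {1..n-1} \<Longrightarrow>
      (\<kappa>/2 + 2) * h i j + (\<kappa>/4 - 1) * (h i (j-1) + h i (j+1))
        - \<kappa>/4 * (v (i-1) j + v (i-1) (j+1) + v i j + v i (j+1)) = 0"
  shows "\<kappa>/4 * (\<Sum>i=1..n. \<Sum>j=1..n. (v (i-1) j + v i j - h i (j-1) - h i j)^2)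
      + (\<Sum>j=1..n. \<Sum>i<n. (v (i+1) j - v i j)^2) + (\<Sum>i=1..n. \<Sum>j<n. (h i (j+1) - h i j)^2) = 0"
proof -
  define D where "D i j = v (i-1) j + v i j - h i (j-1) - h i j" for i j
  have column: "\<kappa>/4 * (\<Sum>i=1..n. (v (i-1) j + v i j) * D i j) + (\<Sum>i<n. (v (i+1) j - v i j)^2) = 0"
    if "j \<in> {1..n}" for j
  proof -
    have "(\<Sum>i=1..n-1. v i j * (\<kappa>/4 * (D i j + D (i+1) j) + (2 * v i j - v (i-1) j - v (i+1) j))) = 0"
      using v_eq[OF _ that] by (intro sum.neutral) (simp add: D_def algebra_simps)
    then show ?thesis
      using sum_energy_identity[of "\<lambda>i. v i j" n "\<kappa>/4" "\<lambda>i. D i j"] v_bdry[OF that] by simp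
  qed
  have row: "- \<kappa>/4 * (\<Sum>j=1..n. (h i (j-1) + h i j) * D i j) + (\<Sum>j<n. (h i (j+1) - h i j)^2) = 0"
    if "i \<in> {1..n}" for i
  proof -
    have "(\<Sum>j=1..n-1. h i j * (- \<kappa>/4 * (D i j + D i (j+1)) + (2 * h i j - h i (j-1) - h i (j+1)))) = 0"
      using h_eq[OF that] by (intro sum.neutral) (simp add: D_def algebra_simps)
    then show ?thesis
      using sum_energy_identity[of "\<lambda>j. h i j" n "- \<kappa>/4" "\<lambda>j. D i j"] h_bdry[OF that] by simp
  qed
  have "(\<Sum>i=1..n. \<Sum>j=1..n. (v (i-1) j + v i j) * D i j) - (\<Sum>i=1..n. \<Sum>j=1..n. (h i (j-1) + h i j) * D i j)
      = (\<Sum>i=1..n. \<Sum>j=1..n. (D i j)^2)"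
    by (simp add: D_def sum_subtractf[symmetric] power2_eq_square algebra_simps)
  moreover have "\<kappa>/4 * (\<Sum>i=1..n. \<Sum>j=1..n. (v (i-1) j + v i j) * D i j)
      + (\<Sum>j=1..n. \<Sum>i<n. (v (i+1) j - v i j)^2) = 0"
  proof -
    have "(\<Sum>j=1..n. \<kappa>/4 * (\<Sum>i=1..n. (v (i-1) j + v i j) * D i j) + (\<Sum>i<n. (v (i+1) j - v i j)^2)) = 0"
      using column by (intro sum.neutral) blast
    then show ?thesis
      by (subst sum.swap) (simp add: sum.distrib sum_distrib_left)
  qed
  moreover have "- \<kappa>/4 * (\<Sum>i=1..n. \<Sum>j=1..n. (h i (j-1) + h i j) * D i j)
      + (\<Sum>i=1..n. \<Sum>j<n. (h i (j+1) - h i j)^2) = 0"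
  proof -
    have "(\<Sum>i=1..n. - \<kappa>/4 * (\<Sum>j=1..n. (h i (j-1) + h i j) * D i j) + (\<Sum>j<n. (h i (j+1) - h i j)^2)) = 0"
      using row by (intro sum.neutral) blast
    then show ?thesis
      by (simp add: sum.distrib sum_distrib_left)
  qed
  ultimately show ?thesis
    unfolding D_def by (simp add: algebra_simps)
qed

lemma staggered_energy_zero:
  fixes v h :: "nat \<Rightarrow> nat \<Rightarrow> real"
  assumes "0 < \<kappa>"
    and v_bdry: "\<And>j. j \<in> {1..n} \<Longrightarrow> v 0 j = 0 \<and> v n j = 0"
    and h_bdry: "\<And>i. i \<in> {1..n} \<Longrightarrow> h i 0 = 0 \<and> h i n = 0"
    and v_eq: "\<And>i j. i \<in> {1..n-1} \<Longrightarrow> j \<in> {1..n} \<Longrightarrow>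
      (\<kappa>/2 + 2) * v i j + (\<kappa>/4 - 1) * (v (i-1) j + v (i+1) j)
        - \<kappa>/4 * (h i (j-1) + h i j + h (i+1) (j-1) + h (i+1) j) = 0"
    and h_eq: "\<And>i j. i \<in> {1..n} \<Longrightarrow> j \<in> {1..n-1} \<Longrightarrow>
      (\<kappa>/2 + 2) * h i j + (\<kappa>/4 - 1) * (h i (j-1) + h i (j+1))
        - \<kappa>/4 * (v (i-1) j + v (i-1) (j+1) + v i j + v i (j+1)) = 0"
  shows "(\<forall>i\<le>n. \<forall>j\<in>{1..n}. v i j = 0) \<and> (\<forall>i\<in>{1..n}. \<forall>j\<le>n. h i j = 0)"
proof -
  define V where "V j = (\<Sum>i<n. (v (i+1) j - v i j)^2)" for j
  define H where "H i = (\<Sum>j<n. (h i (j+1) - h i j)^2)" for i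
  have V_nonneg: "0 \<le> V j" and H_nonneg: "0 \<le> H i" for i j
    by (simp_all add: V_def H_def sum_nonneg)
  have "0 \<le> \<kappa>/4 * (\<Sum>i=1..n. \<Sum>j=1..n. (v (i-1) j + v i j - h i (j-1) - h i j)^2)"
    using \<open>0 < \<kappa>\<close> by (simp add: sum_nonneg)
  moreover have "0 \<le> (\<Sum>j=1..n. V j)" "0 \<le> (\<Sum>i=1..n. H i)"
    by (simp_all add: sum_nonneg V_nonneg H_nonneg)
  ultimately have "(\<Sum>j=1..n. V j) = 0" "(\<Sum>i=1..n. H i) = 0"
    using staggered_energy_identity[OF v_bdry h_bdry v_eq h_eq] unfolding V_def H_def by linarith+
  then have V_zero: "\<forall>j\<in>{1..n}. V j = 0" and H_zero: "\<forall>i\<in>{1..n}. H i = 0"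
    by (simp_all add: sum_nonneg_eq_0_iff V_nonneg H_nonneg)
  show ?thesis
  proof (intro conjI ballI allI impI)
    fix i j assume "i \<le> n" "j \<in> {1..n}"
    then show "v i j = 0"
      using zero_if_sum_square_differences_zero[of "\<lambda>i. v i j" n i] v_bdry V_zero
      unfolding V_def by blast
  next
    fix i j assume "j \<le> n" "i \<in> {1..n}"
    then show "h i j = 0"
      using zero_if_sum_square_differences_zero[of "\<lambda>j. h i j" n j] h_bdry H_zero
      unfolding H_def by blast
  qed
qed

section \<open>The seven-point operator\<close>

definition inner_grid :: "nat \<Rightarrow> (nat \<times> nat) set" where
  "inner_grid n = grid n - bdry_grid n"

lemma finite_grid: "finite (grid n)"
  by (rule finite_subset[of _ "{..2*n+1} \<times> {..2*n+1}"]) (auto simp: grid_def)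

lemma grid_nonempty:
  assumes "n \<ge> 1"
  shows "grid n \<noteq> {}"
proof -
  have "(1, 2) \<in> grid n"
    using assms by (simp add: grid_def)
  then show ?thesis
    by blast
qed

lemma grid_cases:
  assumes "p \<in> grid n"
  obtains (vertical_edge) i j where "p = (2*i+1, 2*j)" "i \<le> n" "j \<in> {1..n}"
    | (horizontal_edge) i j where "p = (2*i, 2*j+1)" "i \<in> {1..n}" "j \<le> n"
proof -
  obtain K L where p: "p = (K, L)" and KL: "1 \<le> K" "K \<le> 2*n+1" "1 \<le> L" "L \<le> 2*n+1" "odd (K + L)"
    using assms by (auto simp: grid_def)
  show ?thesis
  proof (cases "odd K")
    case True
    then obtain i j where "K = 2*i+1" "L = 2*j"
      using KL(5) by (metis oddE evenE even_add)
    with KL show ?thesis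
      using vertical_edge unfolding p by simp
  next
    case False
    then obtain i j where "K = 2*i" "L = 2*j+1"
      using KL(5) by (metis oddE evenE even_add)
    with KL show ?thesis
      using horizontal_edge unfolding p by simp
  qed
qed

lemma inner_grid_iff:
  "(K, L) \<in> inner_grid n \<longleftrightarrow> 1 < K \<and> K < 2*n+1 \<and> 1 < L \<and> L < 2*n+1 \<and> odd (K + L)"
  unfolding inner_grid_def bdry_grid_def grid_def by auto presburger+

lemma inner_grid_eq:
  "inner_grid n = (\<lambda>(i, j). (2*i+1, 2*j)) ` ({1..n-1} \<times> {1..n})
                \<union> (\<lambda>(i, j). (2*i, 2*j+1)) ` ({1..n} \<times> {1..n-1})" (is "_ = ?edges")
proof (intro equalityI subsetI)
  fix p assume p: "p \<in> inner_grid n"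
  then have "p \<in> grid n"
    by (simp add: inner_grid_def)
  then show "p \<in> ?edges"
  proof (cases rule: grid_cases)
    case (vertical_edge i j)
    with p show ?thesis
      by (auto simp: inner_grid_iff intro!: image_eqI[of _ _ "(i, j)"])
  next
    case (horizontal_edge i j)
    with p show ?thesis
      by (auto simp: inner_grid_iff intro!: image_eqI[of _ _ "(i, j)"])
  qed
qed (auto simp: inner_grid_iff)

text \<open>In doubled indices the axial neighbours of an edge midpoint p are the midpoints of the two
  parallel edges across the adjacent cells, and the diagonal ones are the midpoints of the remaining
  edges of these two cells.\<close>

fun seven_point_op :: "real \<Rightarrow> (nat \<times> nat \<Rightarrow> real) \<Rightarrow> nat \<times> nat \<Rightarrow> real" where
  "seven_point_op \<kappa> u (K, L) =
     (\<kappa>/2 + 2) * u (K, L)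
     + (\<kappa>/4 - 1) * (if odd K then u (K - 2, L) + u (K + 2, L) else u (K, L - 2) + u (K, L + 2))
     - \<kappa>/4 * (u (K - 1, L - 1) + u (K - 1, L + 1) + u (K + 1, L - 1) + u (K + 1, L + 1))"

fun stencil :: "nat \<times> nat \<Rightarrow> (nat \<times> nat) set" where
  "stencil (K, L) =
     (if odd K then {(K - 2, L), (K + 2, L)} else {(K, L - 2), (K, L + 2)})
     \<union> {(K - 1, L - 1), (K - 1, L + 1), (K + 1, L - 1), (K + 1, L + 1)}"

definition scheme_rhs :: "nat \<Rightarrow> (real \<times> real \<Rightarrow> real) \<Rightarrow> nat \<times> nat \<Rightarrow> real" where
  "scheme_rhs n f p = (1 / real n)^2 / 2 * f (coord n (fst p), coord n (snd p))"

lemma stencil_subset_grid: "p \<in> inner_grid n \<Longrightarrow> stencil p \<subseteq> grid n"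
  by (cases p) (auto simp: inner_grid_iff grid_def; presburger)

lemma seven_point_op_cong:
  assumes "\<forall>q\<in>insert p (stencil p). u q = v q"
  shows "seven_point_op \<kappa> u p = seven_point_op \<kappa> v p"
  using assms by (cases p) auto

lemma seven_point_op_sum:
  "seven_point_op \<kappa> (\<lambda>r. \<Sum>q\<in>A. c q * F q r) p = (\<Sum>q\<in>A. c q * seven_point_op \<kappa> (F q) p)"
  by (cases p) (simp add: sum_distrib_left sum.distrib sum_subtractf ring_distribs mult.left_commute if_distrib if_distribR)

lemma seven_point_iff:
  "seven_point n \<kappa> f g u \<longleftrightarrow>
     (\<forall>p\<in>bdry_grid n. u p = Qb n g p) \<and> (\<forall>p\<in>inner_grid n. seven_point_op \<kappa> u p = scheme_rhs n f p)"
proof -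
  have vertical: "seven_point_op \<kappa> u (2*i+1, 2*j) =
      (\<kappa>/4 - 1) * u (2*i+3, 2*j) + (\<kappa>/2 + 2) * u (2*i+1, 2*j) + (\<kappa>/4 - 1) * u (2*i-1, 2*j)
      + - \<kappa>/4 * (u (2*i+2, 2*j-1) + u (2*i+2, 2*j+1) + u (2*i, 2*j-1) + u (2*i, 2*j+1))" for i j
  proof -
    have "2*i+1-2 = 2*i-1" "2*i+1+2 = 2*i+3" "2*i+1-1 = 2*i" "2*i+1+1 = 2*i+2" "odd (2*i+1)"
      by simp_all
    then show ?thesis
      by (simp only: seven_point_op.simps if_True) (simp add: algebra_simps)
  qed
  have horizontal: "seven_point_op \<kappa> u (2*i, 2*j+1) =
      (\<kappa>/4 - 1) * u (2*i, 2*j+3) + (\<kappa>/2 + 2) * u (2*i, 2*j+1) + (\<kappa>/4 - 1) * u (2*i, 2*j-1)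
      + - \<kappa>/4 * (u (2*i-1, 2*j+2) + u (2*i+1, 2*j+2) + u (2*i-1, 2*j) + u (2*i+1, 2*j))" for i j
  proof -
    have "2*j+1-2 = 2*j-1" "2*j+1+2 = 2*j+3" "2*j+1-1 = 2*j" "2*j+1+1 = 2*j+2" "\<not> odd (2*i)"
      by simp_all
    then show ?thesis
      by (simp only: seven_point_op.simps if_False) (simp add: algebra_simps)
  qed
  show ?thesis
    unfolding seven_point_def inner_grid_eq Let_def ball_Un
    by (simp only: ball_simps(9) split_paired_Ball_Sigma prod.case vertical horizontal
        scheme_rhs_def fst_conv snd_conv)
qed

lemma seven_point_op_vertical_edge:
  assumes "1 \<le> i" "1 \<le> j"
  shows "seven_point_op \<kappa> w (2*i+1, 2*j) =
    (\<kappa>/2 + 2) * w (2*i+1, 2*j) + (\<kappa>/4 - 1) * (w (2*(i-1)+1, 2*j) + w (2*(i+1)+1, 2*j))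
    - \<kappa>/4 * (w (2*i, 2*(j-1)+1) + w (2*i, 2*j+1) + w (2*(i+1), 2*(j-1)+1) + w (2*(i+1), 2*j+1))"
proof -
  have "2*i+1-2 = 2*(i-1)+1" "2*i+1+2 = 2*(i+1)+1" "2*i+1-1 = 2*i" "2*i+1+1 = 2*(i+1)"
    "2*j-1 = 2*(j-1)+1" "odd (2*i+1)"
    using assms by auto
  then show ?thesis
    by (simp only: seven_point_op.simps not_False_eq_True if_True)
qed

lemma seven_point_op_horizontal_edge:
  assumes "1 \<le> i" "1 \<le> j"
  shows "seven_point_op \<kappa> w (2*i, 2*j+1) =
    (\<kappa>/2 + 2) * w (2*i, 2*j+1) + (\<kappa>/4 - 1) * (w (2*i, 2*(j-1)+1) + w (2*i, 2*(j+1)+1))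
    - \<kappa>/4 * (w (2*(i-1)+1, 2*j) + w (2*(i-1)+1, 2*(j+1)) + w (2*i+1, 2*j) + w (2*i+1, 2*(j+1)))"
proof -
  have "2*j+1-2 = 2*(j-1)+1" "2*j+1+2 = 2*(j+1)+1" "2*j+1-1 = 2*j" "2*j+1+1 = 2*(j+1)"
    "2*i-1 = 2*(i-1)+1" "\<not> odd (2*i)"
    using assms by auto
  then show ?thesis
    by (simp only: seven_point_op.simps if_False)
qed

lemma five_point_iff_seven_point: "n \<ge> 1 \<Longrightarrow> five_point n f g u \<longleftrightarrow> seven_point n 4 f g u"
  unfolding five_point_def seven_point_def Let_def by (simp add: field_simps)

section \<open>Unique solvability\<close>

lemma seven_point_dirichlet_zero:
  assumes "0 < \<kappa>"
    and bdry: "\<forall>p\<in>bdry_grid n. w p = 0"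
    and inner: "\<forall>p\<in>inner_grid n. seven_point_op \<kappa> w p = 0"
  shows "\<forall>p\<in>grid n. w p = 0"
proof -
  define v where "v i j = w (2*i+1, 2*j)" for i j
  define h where "h i j = w (2*i, 2*j+1)" for i j
  have v_bdry: "v 0 j = 0 \<and> v n j = 0" if "j \<in> {1..n}" for j
    using bdry that by (simp add: v_def bdry_grid_def grid_def)
  have h_bdry: "h i 0 = 0 \<and> h i n = 0" if "i \<in> {1..n}" for i
    using bdry that by (simp add: h_def bdry_grid_def grid_def)
  have v_eq: "(\<kappa>/2 + 2) * v i j + (\<kappa>/4 - 1) * (v (i-1) j + v (i+1) j)
      - \<kappa>/4 * (h i (j-1) + h i j + h (i+1) (j-1) + h (i+1) j) = 0"
    if "i \<in> {1..n-1}" "j \<in> {1..n}" for i j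
  proof -
    have "1 \<le> i" "1 \<le> j"
      using that by auto
    have "seven_point_op \<kappa> w (2*i+1, 2*j) = 0"
      using inner that by (auto simp: inner_grid_iff simp del: seven_point_op.simps)
    then show ?thesis
      unfolding seven_point_op_vertical_edge[OF \<open>1 \<le> i\<close> \<open>1 \<le> j\<close>] v_def h_def .
  qed
  have h_eq: "(\<kappa>/2 + 2) * h i j + (\<kappa>/4 - 1) * (h i (j-1) + h i (j+1))
      - \<kappa>/4 * (v (i-1) j + v (i-1) (j+1) + v i j + v i (j+1)) = 0"
    if "i \<in> {1..n}" "j \<in> {1..n-1}" for i j
  proof -
    have "1 \<le> i" "1 \<le> j"
      using that by auto
    have "seven_point_op \<kappa> w (2*i, 2*j+1) = 0"
      using inner that by (auto simp: inner_grid_iff simp del: seven_point_op.simps)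
    then show ?thesis
      unfolding seven_point_op_horizontal_edge[OF \<open>1 \<le> i\<close> \<open>1 \<le> j\<close>] v_def h_def .
  qed
  have zero: "(\<forall>i\<le>n. \<forall>j\<in>{1..n}. v i j = 0) \<and> (\<forall>i\<in>{1..n}. \<forall>j\<le>n. h i j = 0)"
    using staggered_energy_zero[OF \<open>0 < \<kappa>\<close> v_bdry h_bdry v_eq h_eq] by blast
  show ?thesis
  proof
    fix p assume "p \<in> grid n"
    then show "w p = 0"
      by (cases rule: grid_cases) (use zero in \<open>auto simp: v_def h_def\<close>)
  qed
qed

lemma seven_point_unique_solution:
  assumes "0 < \<kappa>"
  shows "\<exists>!u. u \<in> extensional (grid n) \<and> seven_point n \<kappa> f g u"
proof -
  define delta :: "nat \<times> nat \<Rightarrow> nat \<times> nat \<Rightarrow> real"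
    where "delta q r = (if r = q then 1 else 0)" for q r
  define a where "a p q = (if p \<in> inner_grid n then seven_point_op \<kappa> (delta q) p else delta q p)" for p q
  have expand: "(\<Sum>q\<in>grid n. u q * delta q r) = u r" if "r \<in> grid n" for u r
  proof -
    have "(\<Sum>q\<in>grid n. u q * delta q r) = (\<Sum>q\<in>grid n. if r = q then u q else 0)"
      by (rule sum.cong) (auto simp: delta_def)
    then show ?thesis
      using that finite_grid by simp
  qed
  have a_mult: "(\<Sum>q\<in>grid n. a p q * u q) = (if p \<in> inner_grid n then seven_point_op \<kappa> u p else u p)"
    if "p \<in> grid n" for p u
  proof (cases "p \<in> inner_grid n")
    case True
    have "(\<Sum>q\<in>grid n. a p q * u q) = seven_point_op \<kappa> (\<lambda>r. \<Sum>q\<in>grid n. u q * delta q r) p"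
      using True by (simp add: a_def seven_point_op_sum mult.commute)
    also have "\<dots> = seven_point_op \<kappa> u p"
      using stencil_subset_grid[OF True] that by (intro seven_point_op_cong) (auto simp: expand)
    finally show ?thesis
      using True by simp
  next
    case False
    then show ?thesis
      using expand[OF that] by (simp add: a_def mult.commute)
  qed
  have bdry_iff: "p \<in> bdry_grid n \<longleftrightarrow> p \<in> grid n \<and> p \<notin> inner_grid n" for p
    by (auto simp: inner_grid_def bdry_grid_def)
  have inner_subset: "inner_grid n \<subseteq> grid n"
    by (auto simp: inner_grid_def)
  have seven_point_linear: "seven_point n \<kappa> f g u \<longleftrightarrow>
      (\<forall>p\<in>grid n. (\<Sum>q\<in>grid n. a p q * u q) = (if p \<in> inner_grid n then scheme_rhs n f p else Qb n g p))"
    for u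
    unfolding seven_point_iff using inner_subset by (auto simp: a_mult bdry_iff)
  have "\<forall>q\<in>grid n. w q = 0" if hom: "\<forall>p\<in>grid n. (\<Sum>q\<in>grid n. a p q * w q) = 0" for w
  proof (rule seven_point_dirichlet_zero[OF \<open>0 < \<kappa>\<close>])
    have "(if p \<in> inner_grid n then seven_point_op \<kappa> w p else w p) = 0" if "p \<in> grid n" for p
    proof -
      have "(\<Sum>q\<in>grid n. a p q * w q) = 0"
        using hom that by blast
      then show ?thesis
        unfolding a_mult[OF that] .
    qed
    then show "\<forall>p\<in>bdry_grid n. w p = 0" "\<forall>p\<in>inner_grid n. seven_point_op \<kappa> w p = 0"
      using inner_subset by (fastforce simp: bdry_iff)+
  qed
  then show ?thesis
    unfolding seven_point_linear by (rule finite_linear_system_unique_solution[OF finite_grid])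
qed

section \<open>Discrete maximum principle\<close>

lemma seven_point_op_local_max:
  assumes "0 < \<kappa>" "\<kappa> \<le> 4"
    and op_nonpos: "seven_point_op \<kappa> u (K, L) \<le> 0"
    and local_max: "\<forall>q\<in>stencil (K, L). u q \<le> u (K, L)"
  shows "u (K + 1, L + 1) = u (K, L)"
proof -
  define d where "d q = u (K, L) - u q" for q
  have d_nonneg: "0 \<le> d q" if "q \<in> stencil (K, L)" for q
    using bspec[OF local_max that] by (simp add: d_def)
  define axial where
    "axial = (if odd K then d (K - 2, L) + d (K + 2, L) else d (K, L - 2) + d (K, L + 2))"
  define diagonal where
    "diagonal = d (K - 1, L - 1) + d (K - 1, L + 1) + d (K + 1, L - 1) + d (K + 1, L + 1)"
  have "seven_point_op \<kappa> u (K, L) = (1 - \<kappa>/4) * axial + \<kappa>/4 * diagonal"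
    by (cases "odd K") (simp_all add: axial_def diagonal_def d_def field_simps)
  moreover have "0 \<le> (1 - \<kappa>/4) * axial"
    using \<open>\<kappa> \<le> 4\<close> d_nonneg by (simp add: axial_def)
  ultimately have "\<kappa>/4 * diagonal \<le> 0"
    using op_nonpos by linarith
  then have "diagonal \<le> 0"
    using \<open>0 < \<kappa>\<close> by (simp add: mult_le_0_iff)
  moreover have "0 \<le> d (K - 1, L - 1)" "0 \<le> d (K - 1, L + 1)" "0 \<le> d (K + 1, L - 1)" "0 \<le> d (K + 1, L + 1)"
    by (intro d_nonneg; simp)+
  ultimately have "d (K + 1, L + 1) = 0"
    unfolding diagonal_def by linarith
  then show ?thesis
    by (simp add: d_def)
qed

lemma finite_obtains_max_with_largest_index_sum:
  fixes u :: "nat \<times> nat \<Rightarrow> 'b::linorder"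
  assumes "finite G" "G \<noteq> {}"
  obtains q where "q \<in> G" "\<forall>p\<in>G. u p \<le> u q"
    and "\<forall>p\<in>G. u p = u q \<longrightarrow> fst p + snd p \<le> fst q + snd q"
proof -
  define M where "M = Max (u ` G)"
  define S where "S = {p \<in> G. u p = M}"
  define \<sigma> :: "nat \<times> nat \<Rightarrow> nat" where "\<sigma> p = fst p + snd p" for p
  have le_M: "u p \<le> M" if "p \<in> G" for p
    unfolding M_def using assms(1) that by simp
  have "M \<in> u ` G"
    unfolding M_def using assms by simp
  then have "S \<noteq> {}"
    unfolding S_def by blast
  have "finite S"
    using assms(1) by (rule finite_subset[rotated]) (simp add: S_def)
  have "Max (\<sigma> ` S) \<in> \<sigma> ` S"
    using \<open>finite S\<close> \<open>S \<noteq> {}\<close> by simp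
  then obtain q where q: "q \<in> S" "\<sigma> q = Max (\<sigma> ` S)"
    by (metis imageE)
  have "\<sigma> p \<le> \<sigma> q" if "p \<in> S" for p
    unfolding q(2) using \<open>finite S\<close> that by simp
  then show ?thesis
    using that[of q] q(1) le_M by (simp add: S_def \<sigma>_def)
qed

lemma seven_point_max_principle:
  assumes "0 < \<kappa>" "\<kappa> \<le> 4" "n \<ge> 1"
    and op_nonpos: "\<forall>p\<in>inner_grid n. seven_point_op \<kappa> u p \<le> 0"
  shows "\<exists>q\<in>bdry_grid n. \<forall>p\<in>grid n. u p \<le> u q"
proof -
  obtain q where q: "q \<in> grid n" "\<forall>p\<in>grid n. u p \<le> u q"
    and top: "\<forall>p\<in>grid n. u p = u q \<longrightarrow> fst p + snd p \<le> fst q + snd q"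
    by (rule finite_obtains_max_with_largest_index_sum[OF finite_grid grid_nonempty[OF \<open>n \<ge> 1\<close>]])
  obtain K L where qKL: "q = (K, L)"
    by fastforce
  have "q \<in> bdry_grid n"
  proof (rule ccontr)
    assume "q \<notin> bdry_grid n"
    then have inner: "(K, L) \<in> inner_grid n"
      using q(1) by (simp add: inner_grid_def qKL)
    then have stencil: "stencil (K, L) \<subseteq> grid n"
      by (rule stencil_subset_grid)
    have "seven_point_op \<kappa> u (K, L) \<le> 0"
      using op_nonpos inner by blast
    moreover have "\<forall>r\<in>stencil (K, L). u r \<le> u (K, L)"
      using stencil q(2) unfolding qKL by blast
    ultimately have "u (K + 1, L + 1) = u (K, L)"
      by (rule seven_point_op_local_max[OF \<open>0 < \<kappa>\<close> \<open>\<kappa> \<le> 4\<close>])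
    moreover have "(K + 1, L + 1) \<in> grid n"
      using stencil by auto
    ultimately have "fst (K + 1, L + 1) + snd (K + 1, L + 1) \<le> fst q + snd q"
      using top unfolding qKL by blast
    then show False
      by (simp add: qKL)
  qed
  with q(2) show ?thesis
    by blast
qed

lemma coord_in_open_unit:
  assumes "1 < K" "K < 2*n+1"
  shows "0 < coord n K \<and> coord n K < 1"
proof -
  have "1 < real K" "real K < 2 * real n + 1"
    using assms by linarith+
  then show ?thesis
    by (simp add: coord_def field_simps)
qed

lemma scheme_rhs_nonpos:
  assumes f_nonpos: "\<forall>x y. 0 < x \<and> x < 1 \<and> 0 < y \<and> y < 1 \<longrightarrow> f (x, y) \<le> 0"
    and "p \<in> inner_grid n"
  shows "scheme_rhs n f p \<le> 0"
proof -
  obtain K L where p: "p = (K, L)" and KL: "1 < K" "K < 2*n+1" "1 < L" "L < 2*n+1"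
    using assms(2) by (cases p) (auto simp: inner_grid_iff)
  have "f (coord n K, coord n L) \<le> 0"
    using f_nonpos coord_in_open_unit[OF KL(1,2)] coord_in_open_unit[OF KL(3,4)] by blast
  then show ?thesis
    unfolding scheme_rhs_def p fst_conv snd_conv by (rule mult_nonneg_nonpos[rotated]) simp
qed

lemma seven_point_Max_le_boundary:
  assumes "0 < \<kappa>" "\<kappa> \<le> 4" "n \<ge> 1"
    and f_nonpos: "\<forall>x y. 0 < x \<and> x < 1 \<and> 0 < y \<and> y < 1 \<longrightarrow> f (x, y) \<le> 0"
    and u: "seven_point n \<kappa> f g u"
  shows "Max (u ` grid n) \<le> Max (Qb n g ` bdry_grid n)"
proof -
  have u_bdry: "\<forall>p\<in>bdry_grid n. u p = Qb n g p"
    using u by (simp add: seven_point_iff)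
  have "\<forall>p\<in>inner_grid n. seven_point_op \<kappa> u p \<le> 0"
    using u scheme_rhs_nonpos[OF f_nonpos] by (simp add: seven_point_iff)
  then obtain q where q: "q \<in> bdry_grid n" "\<forall>p\<in>grid n. u p \<le> u q"
    using seven_point_max_principle[OF assms(1-3)] by blast
  have "finite (bdry_grid n)"
    by (rule finite_subset[OF _ finite_grid]) (auto simp: bdry_grid_def)
  have "Max (u ` grid n) \<le> u q"
    using q(2) finite_grid grid_nonempty[OF \<open>n \<ge> 1\<close>] by simp
  also have "u q = Qb n g q"
    using u_bdry q(1) by blast
  also have "\<dots> \<le> Max (Qb n g ` bdry_grid n)"
    using q(1) \<open>finite (bdry_grid n)\<close> by simp
  finally show ?thesis .
qed

theorem theorem5p2:
  fixes n :: nat and f g :: "real \<times> real \<Rightarrow> real"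
  assumes n2: "n \<ge> 2"
    and f_cont: "continuous_on (cbox (0,0) (1,1)) f"
    and g_bot: "(\<lambda>t. g (t, 0)) integrable_on {0..1}"
    and g_top: "(\<lambda>t. g (t, 1)) integrable_on {0..1}"
    and g_left: "(\<lambda>t. g (0, t)) integrable_on {0..1}"
    and g_right: "(\<lambda>t. g (1, t)) integrable_on {0..1}"
  shows "(\<forall>\<kappa>>0. \<exists>!u. u \<in> extensional (grid n) \<and> seven_point n \<kappa> f g u)
     \<and> (\<exists>!u. u \<in> extensional (grid n) \<and> five_point n f g u)
     \<and> ((\<forall>x y. 0 < x \<and> x < 1 \<and> 0 < y \<and> y < 1 \<longrightarrow> f (x, y) \<le> 0) \<longrightarrow>
          (\<forall>\<kappa>. 0 < \<kappa> \<and> \<kappa> \<le> 4 \<longrightarrow> (\<forall>u. seven_point n \<kappa> f g u \<longrightarrow>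
              Max (u ` grid n) \<le> Max (Qb n g ` bdry_grid n)))
        \<and> (\<forall>u. five_point n f g u \<longrightarrow> Max (u ` grid n) \<le> Max (Qb n g ` bdry_grid n)))"
proof -
  have n: "n \<ge> 1"
    using n2 by simp
  have five_seven: "five_point n f g = seven_point n 4 f g"
    using five_point_iff_seven_point[OF n] by blast
  have Max_le: "Max (u ` grid n) \<le> Max (Qb n g ` bdry_grid n)"
    if "\<forall>x y. 0 < x \<and> x < 1 \<and> 0 < y \<and> y < 1 \<longrightarrow> f (x, y) \<le> 0"
      and "0 < \<kappa>" "\<kappa> \<le> 4" "seven_point n \<kappa> f g u" for \<kappa> u
    using seven_point_Max_le_boundary[OF that(2,3) n that(1,4)] .
  show ?thesis
    unfolding five_seven using seven_point_unique_solution[of _ n f g] Max_le Max_le[of 4] by auto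
qed

end
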